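(* Let $f$ be a bicritical rational map of degree $d$ and let $p$ be a prime number not dividing $d$. Then for every $k\in\mathbb{N}$, the group $\mathrm{Deck}(f^k)$ has no element of order $p$.
   Context: A rational map of degree $d\ge2$ is bicritical if it has exactly two critical points. $\mathrm{Deck}(F)=\{\tau \text{ Möbius} : F\circ\tau=F\}$. $f^k$ is the $k$-th iterate. *)

theory Defs
  imports "HOL-Analysis.Analysis" "HOL-Computational_Algebra.Polynomial"
begin

text \<open>The Riemann sphere is modelled as complex option: Some z is the finite
point z, None is the point at infinity.\<close>

definition rat_eval :: "complex poly \<Rightarrow> complex poly \<Rightarrow> complex option \<Rightarrow> complex option" where
  "rat_eval P Q z =
     (case z of
        Some w \<Rightarrow> (if poly Q w = 0 then None else Some (poly P w / poly Q w))
      | None \<Rightarrow> (if degree P > degree Q then None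
                 else if degree P < degree Q then Some 0
                 else Some (lead_coeff P / lead_coeff Q)))"

definition is_rational_map :: "(complex option \<Rightarrow> complex option) \<Rightarrow> nat \<Rightarrow> bool" where
  "is_rational_map g d \<longleftrightarrow>
     (\<exists>P Q. coprime P Q \<and> Q \<noteq> 0 \<and> max (degree P) (degree Q) = d \<and> g = rat_eval P Q)"

definition is_mobius :: "(complex option \<Rightarrow> complex option) \<Rightarrow> bool" where
  "is_mobius \<tau> \<longleftrightarrow>
     (\<exists>a b c d. a * d - b * c \<noteq> 0 \<and> \<tau> = rat_eval [:b, a:] [:d, c:])"

definition sphere_nhd :: "complex option \<Rightarrow> real \<Rightarrow> complex option set" where
  "sphere_nhd z e =
     (case z of
        Some w \<Rightarrow> Some ` ball w e
      | None \<Rightarrow> insert None (Some ` {u. e * norm u > 1}))"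

definition critical_point :: "(complex option \<Rightarrow> complex option) \<Rightarrow> complex option \<Rightarrow> bool" where
  "critical_point g z \<longleftrightarrow> (\<forall>e>0. \<not> inj_on g (sphere_nhd z e))"

definition bicritical :: "(complex option \<Rightarrow> complex option) \<Rightarrow> bool" where
  "bicritical g \<longleftrightarrow> card {z. critical_point g z} = 2"

definition deck :: "(complex option \<Rightarrow> complex option) \<Rightarrow> (complex option \<Rightarrow> complex option) set" where
  "deck F = {\<tau>. is_mobius \<tau> \<and> F \<circ> \<tau> = F}"

definition has_order :: "('a \<Rightarrow> 'a) \<Rightarrow> nat \<Rightarrow> bool" where
  "has_order \<tau> n \<longleftrightarrow> n > 0 \<and> \<tau> ^^ n = id \<and> (\<forall>j. 0 < j \<and> j < n \<longrightarrow> \<tau> ^^ j \<noteq> id)"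

end

theory Submission
  imports Defs
    "HOL-Computational_Algebra.Polynomial_Factorial"
    "HOL-Computational_Algebra.Fundamental_Theorem_Algebra"
    "HOL-Computational_Algebra.Field_as_Ring"
    "HOL-Combinatorics.Orbits"
begin

text \<open>A deck transformation \<tau> of \<open>f ^^ k\<close> permutes every fibre of \<open>f ^^ k\<close>. Away from the
finitely many critical values, a fibre of a rational map of degree d has exactly d points, so
a generic fibre of \<open>f ^^ k\<close> has \<open>d ^ k\<close> points; avoiding also the images of the finitely many
fixed points of the Moebius map \<tau>, \<tau> acts on such a fibre without fixed points. If \<tau> had
prime order p, all its orbits there would have exactly p points, so p would divide \<open>d ^ k\<close>
and hence d. The argument does not use that f is bicritical.\<close>

lemma funpow_gcd_fixed:
  assumes "(f ^^ m) x = x" and "(f ^^ n) x = x" and "m \<noteq> 0"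
  shows "(f ^^ gcd m n) x = x"
proof -
  obtain a b where bezout: "m * a = n * b + gcd m n"
    using bezout_nat[OF assms(3)] by blast
  have fixed_mult: "(f ^^ (l * c)) x = x" if "(f ^^ l) x = x" for l c
  proof -
    have "((f ^^ l) ^^ c) x = x" using that by (induction c) auto
    then show ?thesis by (simp add: funpow_mult)
  qed
  have "x = (f ^^ (gcd m n + n * b)) x"
    using fixed_mult[OF assms(1), of a] bezout by (simp add: add.commute)
  also have "\<dots> = (f ^^ gcd m n) x"
    using fixed_mult[OF assms(2), of b] by (simp add: funpow_add)
  finally show ?thesis by simp
qed

lemma card_orbit_eq_prime:
  assumes p: "prime p" and fixed: "(f ^^ p) x = x" and moved: "f x \<noteq> x"
  shows "card (orbit f x) = p"
proof -
  have "0 < p" using p prime_gt_0_nat by blast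
  have orbit_eq: "orbit f x = (\<lambda>m. (f ^^ m) x) ` {..<p}"
    using orbit_altdef_bounded[OF fixed \<open>0 < p\<close>] by auto
  have "inj_on (\<lambda>m. (f ^^ m) x) {..<p}"
  proof (rule linorder_inj_onI', rule notI)
    fix i j assume "i \<in> {..<p}" "j \<in> {..<p}" "i < j" and eq: "(f ^^ i) x = (f ^^ j) x"
    define n where "n = p - j + i"
    have "(f ^^ n) x = (f ^^ (p - j)) ((f ^^ j) x)"
      unfolding n_def by (simp add: funpow_add eq)
    also have "\<dots> = (f ^^ (p - j + j)) x" by (simp add: funpow_add)
    also have "\<dots> = x" using fixed \<open>j \<in> {..<p}\<close> by simp
    finally have fixed_n: "(f ^^ n) x = x" .
    have "0 < n" "n < p" using \<open>i < j\<close> \<open>j \<in> {..<p}\<close> unfolding n_def by auto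
    then have "coprime p n" using p by (simp add: prime_imp_coprime_nat nat_dvd_not_less)
    then have "gcd n p = 1" by (simp add: coprime_commute)
    then have "(f ^^ 1) x = x" using funpow_gcd_fixed[OF fixed_n fixed] \<open>0 < n\<close> by simp
    then show False using moved by simp
  qed
  then show ?thesis unfolding orbit_eq by (simp add: card_image)
qed

lemma prime_dvd_card_if_fixpoint_free:
  assumes p: "prime p" and period: "f ^^ p = id" and "finite F" and invariant: "f ` F \<subseteq> F"
    and fixpoint_free: "\<forall>x\<in>F. f x \<noteq> x"
  shows "p dvd card F"
proof -
  have "0 < p" using p prime_gt_0_nat by blast
  have fixed: "(f ^^ p) x = x" for x using period by simp
  have self_in_orbit: "x \<in> orbit f x" for x
    using fixed \<open>0 < p\<close> unfolding orbit_altdef by (metis (mono_tags, lifting) mem_Collect_eq)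
  have orbit_subset_F: "orbit f x \<subseteq> F" if "x \<in> F" for x
  proof
    fix y assume "y \<in> orbit f x"
    then show "y \<in> F" by induction (use that invariant in auto)
  qed
  have orbit_eq: "orbit f y = orbit f x" if "y \<in> orbit f x" for x y
  proof (intro set_eqI iffI)
    show "z \<in> orbit f x" if "z \<in> orbit f y" for z using orbit_trans[OF that \<open>y \<in> orbit f x\<close>] .
    have "x \<in> orbit f y" using orbit_swap[OF self_in_orbit \<open>y \<in> orbit f x\<close>] .
    then show "z \<in> orbit f y" if "z \<in> orbit f x" for z using orbit_trans[OF that] by blast
  qed
  have "F = \<Union> (orbit f ` F)" using self_in_orbit orbit_subset_F by blast
  moreover have "p dvd card (\<Union> (orbit f ` F))"
  proof (rule dvd_partition)
    show "finite (\<Union> (orbit f ` F))" using \<open>finite F\<close> orbit_subset_F by (meson UN_least finite_subset)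
    show "\<forall>c\<in>orbit f ` F. p dvd card c"
      using card_orbit_eq_prime[OF p fixed] fixpoint_free by simp
    show "\<forall>c1\<in>orbit f ` F. \<forall>c2\<in>orbit f ` F. c1 \<noteq> c2 \<longrightarrow> c1 \<inter> c2 = {}"
    proof (intro ballI impI)
      fix c1 c2 assume "c1 \<in> orbit f ` F" "c2 \<in> orbit f ` F" "c1 \<noteq> c2"
      then show "c1 \<inter> c2 = {}" using orbit_eq by (metis disjoint_iff imageE)
    qed
  qed
  ultimately show ?thesis by simp
qed

lemma wronskian_neq_0:
  fixes P Q :: "'a::{field_char_0, field_gcd} poly"
  assumes "coprime P Q" and "degree P \<noteq> 0 \<or> degree Q \<noteq> 0"
  shows "pderiv P * Q - P * pderiv Q \<noteq> 0"
proof
  assume "pderiv P * Q - P * pderiv Q = 0"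
  then have eq: "pderiv P * Q = P * pderiv Q" by simp
  have "P dvd pderiv P * Q" by (simp add: eq)
  then have "P dvd pderiv P" by (simp only: coprime_dvd_mult_left_iff[OF assms(1)])
  have "coprime Q P" using assms(1) by (simp add: coprime_commute)
  have "Q dvd P * pderiv Q" by (simp flip: eq)
  then have "Q dvd pderiv Q" by (simp only: coprime_dvd_mult_right_iff[OF \<open>coprime Q P\<close>])
  with \<open>P dvd pderiv P\<close> assms(2) show False by simp
qed

lemma card_roots_eq_degree_if_rsquarefree:
  fixes R :: "complex poly"
  assumes "rsquarefree R"
  shows "card {z. poly R z = 0} = degree R"
proof -
  have "R \<noteq> 0" using assms by (simp add: rsquarefree_def)
  have "degree R = degree (\<Prod>z|poly R z = 0. [:-z, 1:])"
    using complex_poly_decompose_rsquarefree[OF assms] \<open>R \<noteq> 0\<close> by (metis degree_smult_eq leading_coeff_0_iff)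
  also have "\<dots> = (\<Sum>z|poly R z = 0. degree [:-z, 1:])"
    by (rule degree_prod_eq_sum_degree) auto
  finally show ?thesis by simp
qed

lemma poly_wronskian_eq_0_if_multiple_root:
  fixes P Q :: "'a::idom poly"
  assumes "poly (P - smult v Q) z = 0" and "poly (pderiv (P - smult v Q)) z = 0"
  shows "poly (pderiv P * Q - P * pderiv Q) z = 0"
proof -
  have "poly P z = v * poly Q z" "poly (pderiv P) z = v * poly (pderiv Q) z"
    using assms by (simp_all add: pderiv_diff pderiv_smult)
  then show ?thesis by (simp add: algebra_simps)
qed

lemma rat_eval_Some_eq_iff:
  assumes "coprime P Q"
  shows "rat_eval P Q (Some z) = Some v \<longleftrightarrow> poly (P - smult v Q) z = 0"
  using coprime_poly_0[OF assms, of z] by (auto simp: rat_eval_def field_simps)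

lemma degree_diff_smult_eq_max:
  assumes "Q \<noteq> 0" and "rat_eval P Q None \<noteq> Some v"
  shows "degree (P - smult v Q) = max (degree P) (degree Q)"
proof (cases "degree P" "degree Q" rule: linorder_cases)
  case less
  then have "v \<noteq> 0" using assms(2) by (auto simp: rat_eval_def)
  have "degree (P + smult (- v) Q) = degree (smult (- v) Q)"
    by (rule degree_add_eq_right) (use less \<open>v \<noteq> 0\<close> in simp)
  then show ?thesis using less \<open>v \<noteq> 0\<close> by simp
next
  case greater
  then have "degree (smult v Q) < degree P" by (meson degree_smult_le le_less_trans)
  then have "degree (smult (- v) Q) < degree P" by simp
  then have "degree (P + smult (- v) Q) = degree P" by (rule degree_add_eq_left)
  then show ?thesis using greater by simp
next
  case equal
  then have "v \<noteq> lead_coeff P / lead_coeff Q" using assms(2) by (auto simp: rat_eval_def)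
  then have "coeff (P - smult v Q) (degree P) \<noteq> 0" using equal assms(1) by (auto simp: field_simps)
  moreover have "degree (P - smult v Q) \<le> degree P" using equal by (simp add: degree_diff_le)
  ultimately show ?thesis using equal le_degree by (metis le_antisym max.idem)
qed

definition generic_fibre_card :: "('a \<Rightarrow> 'b) \<Rightarrow> nat \<Rightarrow> bool" where
  "generic_fibre_card g n \<longleftrightarrow>
     (\<exists>B. finite B \<and> (\<forall>w. w \<notin> B \<longrightarrow> finite (g -` {w}) \<and> card (g -` {w}) = n))"

lemma generic_fibre_card_id: "generic_fibre_card id 1"
  unfolding generic_fibre_card_def by (intro exI[of _ "{}"]) simp

lemma generic_fibre_card_comp:
  assumes "generic_fibre_card g m" and "generic_fibre_card h n"
  shows "generic_fibre_card (g \<circ> h) (m * n)"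
proof -
  obtain Bg where Bg: "finite Bg" "\<And>w. w \<notin> Bg \<Longrightarrow> finite (g -` {w}) \<and> card (g -` {w}) = m"
    using assms(1) unfolding generic_fibre_card_def by blast
  obtain Bh where Bh: "finite Bh" "\<And>u. u \<notin> Bh \<Longrightarrow> finite (h -` {u}) \<and> card (h -` {u}) = n"
    using assms(2) unfolding generic_fibre_card_def by blast
  have "finite ((g \<circ> h) -` {w}) \<and> card ((g \<circ> h) -` {w}) = m * n" if w: "w \<notin> Bg \<union> g ` Bh" for w
  proof -
    define S where "S = g -` {w}"
    have S: "finite S" "card S = m" "\<And>u. u \<in> S \<Longrightarrow> u \<notin> Bh"
      using Bg(2) w unfolding S_def by auto
    have fibre: "(g \<circ> h) -` {w} = (\<Union>u\<in>S. h -` {u})" unfolding S_def by auto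
    have "card (\<Union>u\<in>S. h -` {u}) = (\<Sum>u\<in>S. card (h -` {u}))"
      by (rule card_UN_disjoint) (use S Bh(2) in auto)
    also have "\<dots> = m * n" using S Bh(2) by simp
    finally show ?thesis using fibre S Bh(2) by simp
  qed
  moreover have "finite (Bg \<union> g ` Bh)" using Bg(1) Bh(1) by simp
  ultimately show ?thesis unfolding generic_fibre_card_def by blast
qed

lemma generic_fibre_card_funpow:
  fixes f :: "'a \<Rightarrow> 'a"
  assumes "generic_fibre_card f d"
  shows "generic_fibre_card (f ^^ k) (d ^ k)"
proof (induction k)
  case 0
  show ?case using generic_fibre_card_id by (simp add: id_def)
next
  case (Suc k)
  show ?case using generic_fibre_card_comp[OF assms Suc.IH] by (metis funpow.simps(2) power_Suc)
qed

text \<open>The critical values of \<open>P / Q\<close> in \<open>\<complex>\<close> are its values at the zeros of the Wronskian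
  \<open>P' Q - P Q'\<close>; for every other finite value \<open>v \<noteq> g \<infinity>\<close>, \<open>P - v Q\<close> has \<open>d\<close> simple roots.\<close>
lemma rational_map_generic_fibre_card:
  assumes "is_rational_map g d" and "d \<noteq> 0"
  shows "generic_fibre_card g d"
proof -
  obtain P Q where cop: "coprime P Q" and "Q \<noteq> 0" and deg: "max (degree P) (degree Q) = d"
    and g: "g = rat_eval P Q"
    using assms(1) unfolding is_rational_map_def by blast
  define W where "W = pderiv P * Q - P * pderiv Q"
  have "W \<noteq> 0" unfolding W_def using wronskian_neq_0[OF cop] deg assms(2) by linarith
  define B where "B = {None, g None} \<union> (\<lambda>z. g (Some z)) ` {z. poly W z = 0}"
  have "finite (g -` {w}) \<and> card (g -` {w}) = d" if "w \<notin> B" for w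
  proof -
    obtain v where v: "w = Some v" "g None \<noteq> Some v" using \<open>w \<notin> B\<close> unfolding B_def by (cases w) auto
    define R where "R = P - smult v Q"
    have "g x = w \<longleftrightarrow> x \<in> Some ` {z. poly R z = 0}" for x
      using v rat_eval_Some_eq_iff[OF cop] unfolding g R_def by (cases x) auto
    then have fibre: "g -` {w} = Some ` {z. poly R z = 0}" by auto
    have "degree R = d" using degree_diff_smult_eq_max \<open>Q \<noteq> 0\<close> v(2) deg unfolding g R_def by simp
    have "poly (pderiv R) z \<noteq> 0" if "poly R z = 0" for z
    proof
      assume "poly (pderiv R) z = 0"
      then have "poly W z = 0"
        using poly_wronskian_eq_0_if_multiple_root \<open>poly R z = 0\<close> unfolding W_def R_def by blast
      moreover have "g (Some z) = w" using fibre \<open>poly R z = 0\<close> by auto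
      ultimately show False using \<open>w \<notin> B\<close> unfolding B_def by auto
    qed
    then have "rsquarefree R" using \<open>degree R = d\<close> assms(2) by (auto simp: rsquarefree_roots)
    then have "R \<noteq> 0" by (simp add: rsquarefree_def)
    show ?thesis
      unfolding fibre using card_roots_eq_degree_if_rsquarefree[OF \<open>rsquarefree R\<close>]
        poly_roots_finite[OF \<open>R \<noteq> 0\<close>] \<open>degree R = d\<close> by (simp add: card_image)
  qed
  moreover have "finite B" unfolding B_def using poly_roots_finite[OF \<open>W \<noteq> 0\<close>] by simp
  ultimately show ?thesis unfolding generic_fibre_card_def by blast
qed

lemma finite_fixpoints_mobius:
  assumes "is_mobius \<tau>" and "\<tau> \<noteq> id"
  shows "finite {z. \<tau> z = z}"
proof -
  obtain a b c d where det: "a * d - b * c \<noteq> 0" and \<tau>: "\<tau> = rat_eval [:b, a:] [:d, c:]"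
    using assms(1) unfolding is_mobius_def by blast
  define F where "F = [:-b, d - a, c:]"
  have "F \<noteq> 0"
  proof
    assume "F = 0"
    then have "b = 0" "c = 0" "d = a" by (simp_all add: F_def)
    then have "\<tau> = id" using det unfolding \<tau> by (auto simp: fun_eq_iff rat_eval_def split: option.split)
    with assms(2) show False ..
  qed
  have "{z. \<tau> z = z} \<subseteq> insert None (Some ` {z. poly F z = 0})"
  proof
    fix x assume "x \<in> {z. \<tau> z = z}"
    then show "x \<in> insert None (Some ` {z. poly F z = 0})"
      by (cases x) (auto simp: \<tau> rat_eval_def F_def field_simps split: if_splits)
  qed
  then show ?thesis using poly_roots_finite[OF \<open>F \<noteq> 0\<close>] finite_subset by auto
qed

theorem mainTheorem6:
  fixes f :: "complex option \<Rightarrow> complex option" and d p :: nat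
  assumes "is_rational_map f d" and "d \<ge> 2" and "bicritical f"
    and "prime p" and "\<not> p dvd d"
  shows "\<forall>k::nat. \<not> (\<exists>\<tau> \<in> deck (f ^^ k). has_order \<tau> p)"
proof (intro allI notI)
  fix k :: nat
  assume "\<exists>\<tau> \<in> deck (f ^^ k). has_order \<tau> p"
  then obtain \<tau> where "is_mobius \<tau>" and deck_eq: "(f ^^ k) \<circ> \<tau> = f ^^ k"
    and period: "\<tau> ^^ p = id" and "\<tau> ^^ 1 \<noteq> id"
    using prime_gt_1_nat[OF \<open>prime p\<close>] unfolding deck_def has_order_def by auto
  then have "finite {z. \<tau> z = z}" using finite_fixpoints_mobius by simp
  have "generic_fibre_card f d" using rational_map_generic_fibre_card assms(1,2) by simp
  then have "generic_fibre_card (f ^^ k) (d ^ k)" by (rule generic_fibre_card_funpow)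
  then obtain B where B: "finite B"
    "\<And>w. w \<notin> B \<Longrightarrow> finite ((f ^^ k) -` {w}) \<and> card ((f ^^ k) -` {w}) = d ^ k"
    unfolding generic_fibre_card_def by blast
  have "infinite (UNIV :: complex option set)" by (simp add: infinite_UNIV_char_0)
  moreover have "finite (B \<union> (f ^^ k) ` {z. \<tau> z = z})" using B(1) \<open>finite {z. \<tau> z = z}\<close> by simp
  ultimately obtain w where w: "w \<notin> B \<union> (f ^^ k) ` {z. \<tau> z = z}"
    using ex_new_if_finite by blast
  define F where "F = (f ^^ k) -` {w}"
  have "p dvd card F"
  proof (rule prime_dvd_card_if_fixpoint_free[OF \<open>prime p\<close> period])
    show "finite F" using B(2) w unfolding F_def by blast
    show "\<tau> ` F \<subseteq> F" using deck_eq unfolding F_def by (auto simp: fun_eq_iff)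
    show "\<forall>x\<in>F. \<tau> x \<noteq> x" using w unfolding F_def by auto
  qed
  then have "p dvd d ^ k" using B(2) w unfolding F_def by auto
  then show False using assms(4,5) prime_dvd_power by blast
qed

end
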